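(* Let $k\ge 2$ be an integer and $i=4k-1$. Then for every $n\in\{2,3,\dots,k\}$, the numerical semigroup $S(i)$ admits a factorization into irreducible numerical semigroups of length $n$. Moreover, if $k\ge 3$, then $S(4k-1)$ admits at least two distinct factorizations of length $k$.
   Context: $\mathbb{N}$ denotes the non-negative integers. A numerical semigroup is a submonoid of $(\mathbb{N},+)$ with finite complement. A numerical semigroup is irreducible if it cannot be written as the intersection of two numerical semigroups properly containing it. For an odd integer $j\ge 3$, $T(j)=\{0,\tfrac{j+1}{2},\tfrac{j+1}{2}+1,\dots,j-1\}\cup\{n\in\mathbb{Z}:n\ge j+1\}$. For odd $i\ge5$, $S(i)=\langle 2,i\rangle\cap T(i)$, where $\langle 2,i\rangle=\{2x+iy:x,y\in\mathbb{N}\}$. Given a numerical semigroup $S$ and irreducible numerical semigroups $S_1,\dots,S_n$, the expression $S_1\cap\dots\cap S_n$ is a factorization of $S$ (of length $n$) if $S=S_1\cap\dots\cap S_n$ and $S\neq\bigcap_{j\in J}S_j$ for every nonempty proper subset $J\subsetneq\{1,\dots,n\}$. Two factorizations are distinct if their sets of factors $\{S_1,\dots,S_n\}$ differ. *)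

theory Defs
  imports Main
begin

definition numerical_semigroup :: "nat set \<Rightarrow> bool" where
  "numerical_semigroup S \<longleftrightarrow> 0 \<in> S \<and> (\<forall>a\<in>S. \<forall>b\<in>S. a + b \<in> S) \<and> finite (UNIV - S)"

definition irreducible_ns :: "nat set \<Rightarrow> bool" where
  "irreducible_ns S \<longleftrightarrow> numerical_semigroup S \<and>
     \<not> (\<exists>A B. numerical_semigroup A \<and> numerical_semigroup B \<and> S \<subset> A \<and> S \<subset> B \<and> S = A \<inter> B)"

definition Tsg :: "nat \<Rightarrow> nat set" where
  "Tsg j = {0} \<union> {(j + 1) div 2 ..< j} \<union> {j + 1 ..}"

definition gen2 :: "nat \<Rightarrow> nat set" where
  "gen2 i = {2 * x + i * y | x y. True}"

definition Ssg :: "nat \<Rightarrow> nat set" where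
  "Ssg i = gen2 i \<inter> Tsg i"

text \<open>A factorization of S, given by its (finite) set of factors; its length is the
  cardinality. Minimality forbids repeated factors, so sets suffice.\<close>
definition is_factorization :: "nat set \<Rightarrow> nat set set \<Rightarrow> bool" where
  "is_factorization S F \<longleftrightarrow> finite F \<and> F \<noteq> {} \<and> (\<forall>X\<in>F. irreducible_ns X) \<and> \<Inter>F = S \<and>
     (\<forall>G. G \<noteq> {} \<and> G \<subset> F \<longrightarrow> \<Inter>G \<noteq> S)"

end

theory Submission
  imports Defs
begin

text \<open>The gaps of S(4k-1) from its multiplicity 2k on are the k odd numbers 2k+1, ..., 4k-1.
  For each such f, T(f) is a symmetric numerical semigroup whose only gap above 2k is f, so
  S(4k-1) is the intersection of these k semigroups T(f). Replacing all T(f) with f < 2a by the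
  single symmetric semigroup <2, 2a+1>, whose odd gaps are the odd numbers below 2a+1, gives
  factorizations of every length 2, ..., k; for a = k+1 this is a second factorization of
  length k, distinct from the first since 2 lies in <2, 2a+1> but in no T(f). Every factor misses a gap of S(4k-1) lying in all the
  other factors, which makes the intersections irredundant; irreducibility follows from the
  criterion that a numerical semigroup with Frobenius number F is irreducible when every other
  gap h satisfies F - h \<in> S or 2h = F.\<close>

lemma mem_gen2_iff:
  assumes "odd i"
  shows "x \<in> gen2 i \<longleftrightarrow> even x \<or> i \<le> x"
proof
  assume "x \<in> gen2 i"
  then obtain a b where x: "x = 2 * a + i * b"
    unfolding gen2_def by blast
  show "even x \<or> i \<le> x"
  proof (cases "b = 0")
    case False
    then have "i \<le> i * b" by simp
    then show ?thesis using x by linarith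
  qed (use x in simp)
next
  assume "even x \<or> i \<le> x"
  then consider "even x" | "odd x" "i \<le> x" by blast
  then show "x \<in> gen2 i"
  proof cases
    case 1
    then have "x = 2 * (x div 2) + i * 0" by simp
    then show ?thesis unfolding gen2_def by blast
  next
    case 2
    with assms have "x = 2 * ((x - i) div 2) + i * 1" by presburger
    then show ?thesis unfolding gen2_def by blast
  qed
qed

lemma mem_Tsg_iff: "x \<in> Tsg j \<longleftrightarrow> x = 0 \<or> ((j + 1) div 2 \<le> x \<and> x \<noteq> j)"
  unfolding Tsg_def by auto

lemma mem_Ssg_iff:
  assumes "odd i"
  shows "x \<in> Ssg i \<longleftrightarrow> x = 0 \<or> ((i + 1) div 2 \<le> x \<and> (even x \<or> i < x))"
  using assms unfolding Ssg_def by (auto simp: mem_gen2_iff mem_Tsg_iff)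

lemma inj_Tsg: "inj Tsg"
proof (rule injI)
  fix a b :: nat
  assume eq: "Tsg a = Tsg b"
  show "a = b"
  proof (rule ccontr)
    assume "a \<noteq> b"
    then have "max a b \<in> Tsg (min a b)" "max a b \<notin> Tsg (max a b)"
      by (auto simp: mem_Tsg_iff)
    with eq show False by (simp add: min_def max_def split: if_splits)
  qed
qed

lemma card_odd_interval: "card {f :: nat. odd f \<and> 2 * a \<le> f \<and> f < 2 * b} = b - a"
proof -
  have "{f :: nat. odd f \<and> 2 * a \<le> f \<and> f < 2 * b} = (\<lambda>j. 2 * j + 1) ` {a..<b}"
  proof (rule set_eqI)
    fix f :: nat
    show "f \<in> {f. odd f \<and> 2 * a \<le> f \<and> f < 2 * b} \<longleftrightarrow> f \<in> (\<lambda>j. 2 * j + 1) ` {a..<b}"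
      by (auto elim!: oddE)
  qed
  moreover have "inj_on (\<lambda>j :: nat. 2 * j + 1) {a..<b}"
    by (rule inj_onI) simp
  ultimately show ?thesis by (simp add: card_image)
qed

lemma numerical_semigroup_Tsg:
  assumes "odd f"
  shows "numerical_semigroup (Tsg f)"
  unfolding numerical_semigroup_def
proof (intro conjI ballI)
  fix a b assume "a \<in> Tsg f" "b \<in> Tsg f"
  moreover have "(f + 1) div 2 + (f + 1) div 2 = f + 1"
    using assms by presburger
  ultimately show "a + b \<in> Tsg f" by (auto simp: mem_Tsg_iff)
next
  have "UNIV - Tsg f \<subseteq> {..f}" by (auto simp: mem_Tsg_iff)
  then show "finite (UNIV - Tsg f)" by (rule finite_subset) simp
qed (simp add: mem_Tsg_iff)

lemma numerical_semigroup_gen2: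
  assumes "odd i"
  shows "numerical_semigroup (gen2 i)"
  unfolding numerical_semigroup_def
proof (intro conjI ballI)
  fix a b assume "a \<in> gen2 i" "b \<in> gen2 i"
  then obtain x y x' y' where "a = 2 * x + i * y" "b = 2 * x' + i * y'"
    unfolding gen2_def by blast
  then have "a + b = 2 * (x + x') + i * (y + y')" by (simp add: algebra_simps)
  then show "a + b \<in> gen2 i" unfolding gen2_def by blast
next
  have "UNIV - gen2 i \<subseteq> {..i}" using assms by (auto simp: mem_gen2_iff)
  then show "finite (UNIV - gen2 i)" by (rule finite_subset) simp
qed (use assms in \<open>simp add: mem_gen2_iff\<close>)

lemma irreducible_nsI:
  assumes X: "numerical_semigroup X" and f: "f \<notin> X"
    and gaps: "\<And>h. h \<notin> X \<Longrightarrow> h \<noteq> f \<Longrightarrow> h < f \<and> (f - h \<in> X \<or> 2 * h = f)"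
  shows "irreducible_ns X"
proof -
  have f_in: "f \<in> A" if A: "numerical_semigroup A" and XA: "X \<subset> A" for A
  proof -
    obtain h where h: "h \<in> A" "h \<notin> X" using XA by blast
    have add: "a + b \<in> A" if "a \<in> A" "b \<in> A" for a b
      using A that unfolding numerical_semigroup_def by blast
    show "f \<in> A"
    proof (cases "h = f")
      case False
      with gaps h(2) have "h < f" and "f - h \<in> X \<or> 2 * h = f" by auto
      then consider "f - h \<in> A" | "h + h = f" using XA by auto
      then show ?thesis
      proof cases
        case 1
        then have "h + (f - h) \<in> A" by (rule add[OF h(1)])
        with \<open>h < f\<close> show ?thesis by simp
      next
        case 2
        with add[OF h(1) h(1)] show ?thesis by simp
      qed
    qed (use h in simp)
  qed
  show ?thesis
    unfolding irreducible_ns_def using X f f_in by blast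
qed

lemma irreducible_Tsg:
  assumes "odd f" "3 \<le> f"
  shows "irreducible_ns (Tsg f)"
  by (rule irreducible_nsI[OF numerical_semigroup_Tsg, of f f])
    (use assms in \<open>auto simp: mem_Tsg_iff\<close>)

lemma irreducible_gen2:
  assumes "odd i" "3 \<le> i"
  shows "irreducible_ns (gen2 i)"
proof (rule irreducible_nsI[OF numerical_semigroup_gen2])
  show "i - 2 \<notin> gen2 i" using assms by (simp add: mem_gen2_iff)
  fix h assume "h \<notin> gen2 i" "h \<noteq> i - 2"
  with assms have "odd h" "h < i" by (auto simp: mem_gen2_iff)
  with assms \<open>h \<noteq> i - 2\<close> have "h < i - 2" by presburger
  moreover from \<open>odd h\<close> assms(1) have "even (i - 2 - h)" by presburger
  ultimately show "h < i - 2 \<and> (i - 2 - h \<in> gen2 i \<or> 2 * h = i - 2)"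
    by (simp add: mem_gen2_iff assms(1))
qed (use assms in simp)

lemma is_factorizationI:
  assumes "finite F" "F \<noteq> {}" "\<forall>X\<in>F. irreducible_ns X" "\<Inter>F = S"
    and private_gap: "\<forall>X\<in>F. \<exists>w. w \<notin> S \<and> (\<forall>Y\<in>F - {X}. w \<in> Y)"
  shows "is_factorization S F"
  unfolding is_factorization_def
proof (intro conjI assms allI impI)
  fix G assume G: "G \<noteq> {} \<and> G \<subset> F"
  then obtain X where X: "X \<in> F" "X \<notin> G" by blast
  with private_gap obtain w where "w \<notin> S" "\<forall>Y\<in>F - {X}. w \<in> Y" by blast
  with G X have "w \<in> \<Inter>G" "w \<notin> S" by auto
  then show "\<Inter>G \<noteq> S" by blast
qed

lemma Inter_Tsg_image:
  assumes "A \<subseteq> {..<2 * N}" "2 * N - 1 \<in> A"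
  shows "\<Inter>(Tsg ` A) = {x. x = 0 \<or> (N \<le> x \<and> x \<notin> A)}"
proof (intro set_eqI iffI)
  fix x assume x: "x \<in> \<Inter>(Tsg ` A)"
  then have "x \<in> Tsg (2 * N - 1)" using assms(2) by blast
  moreover have "0 < x \<Longrightarrow> x \<in> A \<Longrightarrow> False"
    using x by (auto simp: mem_Tsg_iff)
  ultimately show "x \<in> {x. x = 0 \<or> (N \<le> x \<and> x \<notin> A)}"
    using assms by (auto simp: mem_Tsg_iff)
next
  fix x assume "x \<in> {x. x = 0 \<or> (N \<le> x \<and> x \<notin> A)}"
  moreover have "(f + 1) div 2 \<le> N" if "f \<in> A" for f
    using that assms(1) by auto
  ultimately show "x \<in> \<Inter>(Tsg ` A)"
    by (auto simp: mem_Tsg_iff intro: order_trans)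
qed

lemma Ssg_eq:
  assumes "1 \<le> k"
  shows "Ssg (4 * k - 1) = {x. x = 0 \<or> (2 * k \<le> x \<and> (even x \<or> 4 * k \<le> x))}"
proof -
  have "odd (4 * k - 1)" "(4 * k - 1 + 1) div 2 = 2 * k" using assms by presburger+
  then show ?thesis using assms by (auto simp: mem_Ssg_iff)
qed

lemma is_factorization_Ssg_Tsg:
  assumes "1 \<le> k"
  shows "is_factorization (Ssg (4 * k - 1)) (Tsg ` {f. odd f \<and> 2 * k \<le> f \<and> f < 4 * k})"
    (is "is_factorization ?S (Tsg ` ?A)")
proof (rule is_factorizationI)
  have "odd (4 * k - 1)" using assms by presburger
  with assms have "4 * k - 1 \<in> ?A" by simp
  then show "Tsg ` ?A \<noteq> {}" by blast
  show "finite (Tsg ` ?A)" by simp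
  have "3 \<le> f" if "f \<in> ?A" for f using that assms by simp presburger
  then show "\<forall>X\<in>Tsg ` ?A. irreducible_ns X" by (auto intro: irreducible_Tsg)
  have "\<Inter>(Tsg ` ?A) = {x. x = 0 \<or> (2 * k \<le> x \<and> x \<notin> ?A)}"
    by (rule Inter_Tsg_image) (use \<open>4 * k - 1 \<in> ?A\<close> in auto)
  then show "\<Inter>(Tsg ` ?A) = ?S" using Ssg_eq[OF assms] by auto
  show "\<forall>X\<in>Tsg ` ?A. \<exists>w. w \<notin> ?S \<and> (\<forall>Y\<in>Tsg ` ?A - {X}. w \<in> Y)"
  proof
    fix X assume "X \<in> Tsg ` ?A"
    then obtain f where f: "f \<in> ?A" "X = Tsg f" by blast
    have "f \<in> Y" if "Y \<in> Tsg ` ?A - {X}" for Y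
      using that f by (auto simp: mem_Tsg_iff)
    moreover have "f \<notin> ?S" using f Ssg_eq[OF assms] by auto
    ultimately show "\<exists>w. w \<notin> ?S \<and> (\<forall>Y\<in>Tsg ` ?A - {X}. w \<in> Y)" by blast
  qed
qed

lemma is_factorization_Ssg_gen2_Tsg:
  assumes "k < a" "a < 2 * k"
  shows "is_factorization (Ssg (4 * k - 1))
           (insert (gen2 (2 * a + 1)) (Tsg ` {f. odd f \<and> 2 * a \<le> f \<and> f < 4 * k}))"
    (is "is_factorization ?S (insert ?X (Tsg ` ?A))")
proof (rule is_factorizationI)
  have k: "1 \<le> k" using assms by simp
  have "odd (4 * k - 1)" using k by presburger
  with assms have top: "4 * k - 1 \<in> ?A" by simp
  show "finite (insert ?X (Tsg ` ?A))" by simp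
  show "insert ?X (Tsg ` ?A) \<noteq> {}" by simp
  have "3 \<le> f" if "f \<in> ?A" for f using that assms by simp
  then show "\<forall>X\<in>insert ?X (Tsg ` ?A). irreducible_ns X"
    using assms by (auto intro: irreducible_Tsg irreducible_gen2)
  have "odd (2 * a + 1)" by simp
  note mem_X = mem_gen2_iff[OF this]
  have Inter_A: "\<Inter>(Tsg ` ?A) = {x. x = 0 \<or> (2 * k \<le> x \<and> x \<notin> ?A)}"
    by (rule Inter_Tsg_image) (use top in auto)
  have "x \<in> ?X \<and> (x = 0 \<or> (2 * k \<le> x \<and> x \<notin> ?A)) \<longleftrightarrow> x \<in> ?S" for x
    unfolding Ssg_eq[OF k] mem_X using assms by (cases "even x") auto
  then show "\<Inter>(insert ?X (Tsg ` ?A)) = ?S"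
    unfolding Inter_insert Inter_A by blast
  show "\<forall>X\<in>insert ?X (Tsg ` ?A). \<exists>w. w \<notin> ?S \<and> (\<forall>Y\<in>insert ?X (Tsg ` ?A) - {X}. w \<in> Y)"
  proof
    fix X assume "X \<in> insert ?X (Tsg ` ?A)"
    then consider "X = ?X" | f where "f \<in> ?A" "X = Tsg f" by blast
    then show "\<exists>w. w \<notin> ?S \<and> (\<forall>Y\<in>insert ?X (Tsg ` ?A) - {X}. w \<in> Y)"
    proof cases
      case 1
      have "2 * a - 1 \<in> Y" if "Y \<in> Tsg ` ?A" for Y
        using that assms by (auto simp: mem_Tsg_iff)
      moreover have "2 * a - 1 \<notin> ?S" using Ssg_eq[OF k] assms by auto
      ultimately show ?thesis using 1 by blast
    next
      case 2
      from 2 have "odd f" "2 * a \<le> f" by auto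
      then have "f \<in> ?X" by (simp add: mem_gen2_iff) presburger
      moreover have "f \<in> Y" if "Y \<in> Tsg ` ?A - {X}" for Y
        using that 2 assms by (auto simp: mem_Tsg_iff)
      moreover have "f \<notin> ?S" using 2 Ssg_eq[OF k] assms by auto
      ultimately show ?thesis by blast
    qed
  qed
qed

lemma card_Tsg_odd_interval:
  "card (Tsg ` {f. odd f \<and> 2 * a \<le> f \<and> f < 2 * b}) = b - a"
  using card_odd_interval inj_Tsg by (simp add: card_image inj_on_subset)

lemma gen2_notin_Tsg_image:
  assumes "2 \<le> a"
  shows "gen2 i \<notin> Tsg ` {f. odd f \<and> 2 * a \<le> f \<and> f < b}"
proof -
  have "2 = 2 * 1 + i * 0" by simp
  then have "2 \<in> gen2 i" unfolding gen2_def by blast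
  moreover have "2 \<notin> Tsg f" if "5 \<le> f" for f using that by (simp add: mem_Tsg_iff)
  moreover have "5 \<le> f" if "odd f" "2 * a \<le> f" for f using that assms by presburger
  ultimately show ?thesis by blast
qed

theorem mainTheorem4:
  fixes k :: nat
  assumes "k \<ge> 2"
  shows "(\<forall>n\<in>{2..k}. \<exists>F. is_factorization (Ssg (4 * k - 1)) F \<and> card F = n)
     \<and> (k \<ge> 3 \<longrightarrow> (\<exists>F1 F2. is_factorization (Ssg (4 * k - 1)) F1 \<and> card F1 = k
                        \<and> is_factorization (Ssg (4 * k - 1)) F2 \<and> card F2 = k \<and> F1 \<noteq> F2))"
proof -
  let ?S = "Ssg (4 * k - 1)"
  let ?A = "\<lambda>a. {f. odd f \<and> 2 * a \<le> f \<and> f < 2 * (2 * k)}"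
  let ?mixed = "\<lambda>a. insert (gen2 (2 * a + 1)) (Tsg ` ?A a)"
  have mixed: "is_factorization ?S (?mixed a) \<and> card (?mixed a) = 2 * k + 1 - a"
    if "k < a" "a < 2 * k" for a
    using is_factorization_Ssg_gen2_Tsg[OF that] card_Tsg_odd_interval[of a "2 * k"]
      gen2_notin_Tsg_image[of a] that by (simp add: card_insert_if)
  have lengths: "\<exists>F. is_factorization ?S F \<and> card F = n" if "n \<in> {2..k}" for n
  proof -
    from that have "k < 2 * k + 1 - n" "2 * k + 1 - n < 2 * k" by auto
    from mixed[OF this] that show ?thesis by auto
  qed
  have pure: "is_factorization ?S (Tsg ` ?A k) \<and> card (Tsg ` ?A k) = k"
    using is_factorization_Ssg_Tsg card_Tsg_odd_interval[of k "2 * k"] assms by simp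
  have "gen2 (2 * (k + 1) + 1) \<notin> Tsg ` ?A k"
    by (rule gen2_notin_Tsg_image) (use assms in simp)
  then have "?mixed (k + 1) \<noteq> Tsg ` ?A k" by blast
  moreover have "is_factorization ?S (?mixed (k + 1)) \<and> card (?mixed (k + 1)) = k"
    using mixed[of "k + 1"] assms by simp
  ultimately show ?thesis using lengths pure by blast
qed

end
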